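(* Let $X$ be a quasi-Banach function space over $\mathbf{R}^d$ for which $X'\ne\{0\}$. If $\mathbf{1}_{\mathbf{R}^d}\in X$, then $M$ is not bounded from $X'$ to $X'$.
   Context: A quasi-Banach function space over $\mathbf{R}^d$ is a complete quasi-normed space $X\subseteq L^0(\mathbf{R}^d)$ with the ideal property (if $f\in X$, $|g|\le|f|$ then $g\in X$, $\|g\|_X\le\|f\|_X$) and the saturation property (every set of positive measure contains a subset $F$ of positive measure with $\mathbf{1}_F\in X$). Köthe dual: $X'=\{g:fg\in L^1(\mathbf{R}^d)\ \forall f\in X\}$ with $\|g\|_{X'}=\sup_{\|f\|_X=1}\int|fg|$. $M$ is the Hardy–Littlewood maximal operator over axis-parallel cubes. *)

theory Defs
  imports "HOL-Analysis.Analysis"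
begin

text \<open>Functions on R^d are modelled as real-valued functions on a Euclidean space 'a,
  with Lebesgue measure; L^0 classes are handled via almost-everywhere statements.\<close>

definition qBFS :: "('a::euclidean_space \<Rightarrow> real) set \<Rightarrow> (('a \<Rightarrow> real) \<Rightarrow> real) \<Rightarrow> bool" where
  "qBFS X n \<longleftrightarrow>
     X \<subseteq> borel_measurable lebesgue \<and>
     \<comment> \<open>vector space\<close>
     (\<lambda>x. 0) \<in> X \<and>
     (\<forall>f\<in>X. \<forall>g\<in>X. (\<lambda>x. f x + g x) \<in> X) \<and>
     (\<forall>f\<in>X. \<forall>c::real. (\<lambda>x. c * f x) \<in> X) \<and>
     \<comment> \<open>quasi-norm\<close>
     (\<forall>f\<in>X. 0 \<le> n f) \<and>
     (\<forall>f\<in>X. n f = 0 \<longleftrightarrow> (AE x in lebesgue. f x = 0)) \<and>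
     (\<forall>f\<in>X. \<forall>c::real. n (\<lambda>x. c * f x) = \<bar>c\<bar> * n f) \<and>
     (\<exists>K\<ge>1. \<forall>f\<in>X. \<forall>g\<in>X. n (\<lambda>x. f x + g x) \<le> K * (n f + n g)) \<and>
     \<comment> \<open>completeness\<close>
     (\<forall>u::nat \<Rightarrow> 'a \<Rightarrow> real. (\<forall>k. u k \<in> X) \<and>
        (\<forall>e>0. \<exists>N. \<forall>i\<ge>N. \<forall>j\<ge>N. n (\<lambda>x. u i x - u j x) < e) \<longrightarrow>
        (\<exists>f\<in>X. (\<lambda>k. n (\<lambda>x. u k x - f x)) \<longlonglongrightarrow> 0)) \<and>
     \<comment> \<open>ideal property\<close>
     (\<forall>f\<in>X. \<forall>g\<in>borel_measurable lebesgue.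
        (AE x in lebesgue. \<bar>g x\<bar> \<le> \<bar>f x\<bar>) \<longrightarrow> g \<in> X \<and> n g \<le> n f) \<and>
     \<comment> \<open>saturation property\<close>
     (\<forall>E\<in>sets lebesgue. emeasure lebesgue E > 0 \<longrightarrow>
        (\<exists>F\<in>sets lebesgue. F \<subseteq> E \<and> emeasure lebesgue F > 0 \<and> indicator F \<in> X))"

text \<open>Koethe dual and its norm (possibly infinite a priori, hence ennreal).\<close>

definition kothe_dual :: "('a::euclidean_space \<Rightarrow> real) set \<Rightarrow> ('a \<Rightarrow> real) set" where
  "kothe_dual X = {g \<in> borel_measurable lebesgue. \<forall>f\<in>X. integrable lebesgue (\<lambda>x. f x * g x)}"

definition kothe_norm :: "('a::euclidean_space \<Rightarrow> real) set \<Rightarrow> (('a \<Rightarrow> real) \<Rightarrow> real) \<Rightarrow> ('a \<Rightarrow> real) \<Rightarrow> ennreal" where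
  "kothe_norm X n g = (SUP f\<in>{f\<in>X. n f = 1}. \<integral>\<^sup>+ x. ennreal \<bar>f x * g x\<bar> \<partial>lebesgue)"

definition cube :: "'a::euclidean_space \<Rightarrow> real \<Rightarrow> 'a set" where
  "cube a r = cbox a (a + r *\<^sub>R One)"

definition maximal_op :: "('a::euclidean_space \<Rightarrow> real) \<Rightarrow> 'a \<Rightarrow> ennreal" where
  "maximal_op f x = (SUP ar\<in>{(a, r). r > 0 \<and> x \<in> cube a r}.
      (\<integral>\<^sup>+ y. ennreal \<bar>f y\<bar> * indicator (cube (fst ar) (snd ar)) y \<partial>lebesgue)
        / emeasure lebesgue (cube (fst ar) (snd ar)))"

definition maximal_bounded_on :: "('a::euclidean_space \<Rightarrow> real) set \<Rightarrow> (('a \<Rightarrow> real) \<Rightarrow> ennreal) \<Rightarrow> bool" where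
  "maximal_bounded_on Y N \<longleftrightarrow>
     (\<exists>C::real. \<forall>g\<in>Y. (AE x in lebesgue. maximal_op g x < \<infinity>) \<and>
        (\<lambda>x. enn2real (maximal_op g x)) \<in> Y \<and>
        N (\<lambda>x. enn2real (maximal_op g x)) \<le> ennreal C * N g)"

end

theory Submission
  imports Defs
begin

text \<open>Since \<open>\<one> \<in> X\<close>, every \<open>g \<in> X'\<close> is integrable, so boundedness of \<open>M\<close> on \<open>X'\<close> would make
  \<open>M g\<close> integrable.
  But \<open>M g\<close> is never integrable for \<open>g \<noteq> 0\<close>: if \<open>g\<close> has mass \<open>m > 0\<close> on the cube \<open>[-R, R]\<^sup>d\<close>,
  then on the annulus between the cubes of half-width \<open>t\<close> and \<open>2t\<close> (\<open>t \<ge> R\<close>) we have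
  \<open>M g \<ge> m / (4t)\<^sup>d\<close>, while the annulus has measure \<open>(4t)\<^sup>d - (2t)\<^sup>d\<close>. Each of the disjoint dyadic
  annuli \<open>t = 2\<^sup>k R\<close> thus contributes \<open>m (1 - 2\<^sup>-\<^sup>d)\<close> to \<open>\<integral> M g\<close>.\<close>

definition centered_cube :: "real \<Rightarrow> 'a::euclidean_space set" where
  "centered_cube t = cbox (-(t *\<^sub>R One)) (t *\<^sub>R One)"

lemma mem_centered_cube:
  "x \<in> (centered_cube t :: 'a::euclidean_space set) \<longleftrightarrow> (\<forall>b\<in>Basis. \<bar>x \<bullet> b\<bar> \<le> t)"
  unfolding centered_cube_def mem_box by (auto simp: inner_minus_left abs_le_iff)

lemma sets_centered_cube [measurable]: "centered_cube t \<in> sets lebesgue"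
  unfolding centered_cube_def by simp

lemma cube_eq_centered_cube: "cube (-(t *\<^sub>R One)) (2 * t) = (centered_cube t :: 'a::euclidean_space set)"
proof -
  have "-(t *\<^sub>R One) + (2 * t) *\<^sub>R (One::'a) = t *\<^sub>R One"
    by (simp add: algebra_simps flip: scaleR_left_distrib)
  then show ?thesis
    unfolding cube_def centered_cube_def by simp
qed

lemma centered_cube_mono: "s \<le> t \<Longrightarrow> centered_cube s \<subseteq> centered_cube t"
  by (force simp: mem_centered_cube)

lemma centered_cube_cover: "\<exists>j::nat. x \<in> centered_cube (real (Suc j))"
proof -
  obtain j :: nat where "norm x \<le> real (Suc j)"
    using real_arch_simple by (metis le_SucI of_nat_le_iff order.trans)
  then have "x \<in> centered_cube (real (Suc j))"
    unfolding mem_centered_cube using Basis_le_norm order.trans by blast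
  then show ?thesis ..
qed

lemma emeasure_centered_cube:
  assumes "0 \<le> t"
  shows "emeasure lebesgue (centered_cube t :: 'a::euclidean_space set) = ennreal ((2 * t) ^ DIM('a))"
proof -
  have "emeasure lebesgue (centered_cube t :: 'a set)
      = ennreal (\<Prod>b\<in>Basis. (t *\<^sub>R One - (-(t *\<^sub>R One))) \<bullet> (b::'a))"
    unfolding centered_cube_def using assms
    by (simp add: emeasure_lborel_cbox inner_minus_left)
  also have "(\<Prod>b\<in>Basis. (t *\<^sub>R One - (-(t *\<^sub>R One))) \<bullet> (b::'a)) = (\<Prod>b\<in>(Basis::'a set). 2 * t)"
    by (intro prod.cong) (auto simp: inner_diff_left inner_minus_left inner_add_left)
  also have "\<dots> = (2 * t) ^ DIM('a)"
    by simp
  finally show ?thesis .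
qed

lemma emeasure_centered_annulus:
  assumes "0 \<le> t"
  shows "emeasure lebesgue (centered_cube (2 * t) - centered_cube t :: 'a::euclidean_space set)
    = ennreal ((4 * t) ^ DIM('a) - (2 * t) ^ DIM('a))"
proof -
  have "emeasure lebesgue (centered_cube (2 * t) - centered_cube t :: 'a set)
      = emeasure lebesgue (centered_cube (2 * t) :: 'a set) - emeasure lebesgue (centered_cube t :: 'a set)"
    using assms emeasure_centered_cube[of t, where 'a='a]
    by (intro emeasure_Diff) (auto simp: centered_cube_mono)
  also have "\<dots> = ennreal ((2 * (2 * t)) ^ DIM('a)) - ennreal ((2 * t) ^ DIM('a))"
    using assms by (simp only: emeasure_centered_cube mult_nonneg_nonneg zero_le_numeral)
  also have "\<dots> = ennreal ((4 * t) ^ DIM('a) - (2 * t) ^ DIM('a))"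
    using assms by (simp add: ennreal_minus)
  finally show ?thesis .
qed

lemma average_le_maximal_op:
  assumes "0 < r" "x \<in> cube a r" "A \<subseteq> cube a r"
  shows "(\<integral>\<^sup>+ y. ennreal \<bar>f y\<bar> * indicator A y \<partial>lebesgue) / emeasure lebesgue (cube a r)
    \<le> maximal_op f x"
proof -
  have "(\<integral>\<^sup>+ y. ennreal \<bar>f y\<bar> * indicator A y \<partial>lebesgue)
      \<le> (\<integral>\<^sup>+ y. ennreal \<bar>f y\<bar> * indicator (cube a r) y \<partial>lebesgue)"
    using assms(3) by (intro nn_integral_mono) (auto simp: indicator_def)
  then have "(\<integral>\<^sup>+ y. ennreal \<bar>f y\<bar> * indicator A y \<partial>lebesgue) / emeasure lebesgue (cube a r)
      \<le> (\<integral>\<^sup>+ y. ennreal \<bar>f y\<bar> * indicator (cube a r) y \<partial>lebesgue) / emeasure lebesgue (cube a r)"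
    by (rule divide_right_mono_ennreal)
  also have "\<dots> \<le> maximal_op f x"
    unfolding maximal_op_def using assms(1,2)
    by (intro SUP_upper2[where i = "(a, r)"]) auto
  finally show ?thesis .
qed

lemma maximal_op_ge_centered_cube_average:
  assumes "R \<le> t" "0 < t" "x \<in> centered_cube t"
  shows "(\<integral>\<^sup>+ y. ennreal \<bar>f y\<bar> * indicator (centered_cube R) y \<partial>lebesgue) / ennreal ((2 * t) ^ DIM('a))
    \<le> maximal_op f (x::'a::euclidean_space)"
  using average_le_maximal_op[of "2 * t" x "-(t *\<^sub>R One)" "centered_cube R" f] assms
  by (simp only: cube_eq_centered_cube emeasure_centered_cube centered_cube_mono less_imp_le mult_pos_pos
      zero_less_numeral)

lemma nonzero_mass_on_centered_cube:
  fixes f :: "'a::euclidean_space \<Rightarrow> real"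
  assumes "f \<in> borel_measurable lebesgue" "\<not> (AE x in lebesgue. f x = 0)"
  obtains R where "0 < R" "(\<integral>\<^sup>+ y. ennreal \<bar>f y\<bar> * indicator (centered_cube R) y \<partial>lebesgue) \<noteq> 0"
proof -
  have "\<exists>j::nat. (\<integral>\<^sup>+ y. ennreal \<bar>f y\<bar> * indicator (centered_cube (real (Suc j))) y \<partial>lebesgue) \<noteq> 0"
  proof (rule ccontr)
    assume "\<nexists>j. (\<integral>\<^sup>+ y. ennreal \<bar>f y\<bar> * indicator (centered_cube (real (Suc j))) y \<partial>lebesgue) \<noteq> 0"
    then have "\<forall>j::nat. AE y in lebesgue. ennreal \<bar>f y\<bar> * indicator (centered_cube (real (Suc j))) y = 0"
      using assms(1) by (subst (asm) nn_integral_0_iff_AE) auto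
    then have "AE y in lebesgue. \<forall>j::nat. ennreal \<bar>f y\<bar> * indicator (centered_cube (real (Suc j))) y = 0"
      unfolding AE_all_countable .
    then have "AE y in lebesgue. f y = 0"
    proof eventually_elim
      case (elim y)
      obtain j where "y \<in> centered_cube (real (Suc j))"
        using centered_cube_cover by blast
      with elim[rule_format, of j] show "f y = 0"
        by simp
    qed
    with assms(2) show False ..
  qed
  then show ?thesis
    using that of_nat_0_less_iff zero_less_Suc by blast
qed

lemma suminf_cmult_indicator_le:
  fixes c :: "nat \<Rightarrow> ennreal"
  assumes "disjoint_family A" "\<And>k. x \<in> A k \<Longrightarrow> c k \<le> f x"
  shows "(\<Sum>k. c k * indicator (A k) x) \<le> f x"
proof (cases "\<exists>k. x \<in> A k")
  case True
  then obtain k where "x \<in> A k" ..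
  then show ?thesis
    using assms by (simp add: suminf_cmult_indicator)
qed simp

lemma suminf_const_ennreal: "c \<noteq> 0 \<Longrightarrow> (\<Sum>k::nat. c) = (top :: ennreal)"
proof -
  assume "c \<noteq> 0"
  have "(\<Sum>k::nat. ennreal 1) = top"
    by (rule summable_iff_suminf_neq_top) (simp_all add: summable_const_iff)
  then have "(\<Sum>k::nat. c * 1) = c * top"
    by (simp only: ennreal_suminf_cmult ennreal_1)
  with \<open>c \<noteq> 0\<close> show ?thesis
    by (simp add: ennreal_mult_top)
qed

lemma nn_integral_maximal_op_eq_top:
  fixes f :: "'a::euclidean_space \<Rightarrow> real"
  assumes "f \<in> borel_measurable lebesgue" "\<not> (AE x in lebesgue. f x = 0)"
  shows "(\<integral>\<^sup>+ x. maximal_op f x \<partial>lebesgue) = \<infinity>"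
proof -
  let ?d = "DIM('a)"
  obtain R where "0 < R" and m_pos: "(\<integral>\<^sup>+ y. ennreal \<bar>f y\<bar> * indicator (centered_cube R) y \<partial>lebesgue) \<noteq> 0"
    using nonzero_mass_on_centered_cube assms .
  define m where "m = (\<integral>\<^sup>+ y. ennreal \<bar>f y\<bar> * indicator (centered_cube R) y \<partial>lebesgue)"
  define t :: "nat \<Rightarrow> real" where "t k = 2 ^ k * R" for k
  define A :: "nat \<Rightarrow> 'a set" where "A k = centered_cube (t (Suc k)) - centered_cube (t k)" for k
  define c where "c k = m / ennreal ((4 * t k) ^ ?d)" for k
  have t_pos: "0 < t k" and t_Suc: "t (Suc k) = 2 * t k" and R_le_t: "R \<le> t k" for k
    using \<open>0 < R\<close> by (auto simp: t_def)
  have "disjoint_family A"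
    unfolding A_def by (rule disjoint_family_Suc) (simp add: centered_cube_mono t_Suc t_pos less_imp_le)
  have c_le: "c k \<le> maximal_op f x" if "x \<in> A k" for k x
    using maximal_op_ge_centered_cube_average[of R "2 * t k" x f] that R_le_t[of k] t_pos[of k]
    by (simp add: c_def m_def A_def t_Suc)
  have annulus_mass: "c k * emeasure lebesgue (A k) = m * ennreal (1 - 1 / 2 ^ ?d)" for k
  proof -
    have "c k * emeasure lebesgue (A k)
        = m * (ennreal ((4 * t k) ^ ?d - (2 * t k) ^ ?d) / ennreal ((4 * t k) ^ ?d))"
      unfolding c_def A_def t_Suc emeasure_centered_annulus[OF less_imp_le[OF t_pos]]
      by (simp add: ennreal_divide_times)
    also have "((4 * t k) ^ ?d - (2 * t k) ^ ?d) / (4 * t k) ^ ?d = 1 - 1 / 2 ^ ?d"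
      using t_pos[of k] by (simp add: field_simps power_mult_distrib flip: power_mult_distrib[of 2 2])
    then have "ennreal ((4 * t k) ^ ?d - (2 * t k) ^ ?d) / ennreal ((4 * t k) ^ ?d) = ennreal (1 - 1 / 2 ^ ?d)"
      using t_pos[of k] by (simp add: divide_ennreal)
    finally show ?thesis .
  qed
  have "m * ennreal (1 - 1 / 2 ^ ?d) \<noteq> 0"
  proof -
    have "(1::real) < 2 ^ ?d"
      by (rule one_less_power) simp_all
    with m_pos show ?thesis
      by (simp add: m_def) (use \<open>1 < 2 ^ ?d\<close> in linarith)
  qed
  then have "top = (\<Sum>k. c k * emeasure lebesgue (A k))"
    by (simp add: annulus_mass suminf_const_ennreal)
  also have "\<dots> = (\<integral>\<^sup>+ x. (\<Sum>k. c k * indicator (A k) x) \<partial>lebesgue)"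
    by (simp add: A_def nn_integral_suminf nn_integral_cmult_indicator)
  also have "\<dots> \<le> (\<integral>\<^sup>+ x. maximal_op f x \<partial>lebesgue)"
    using \<open>disjoint_family A\<close> c_le by (intro nn_integral_mono suminf_cmult_indicator_le)
  finally show ?thesis
    by (simp add: top_unique)
qed

lemma kothe_dual_integrable:
  assumes "(\<lambda>x. 1) \<in> X" "g \<in> kothe_dual X"
  shows "integrable lebesgue g"
  using assms by (auto simp: kothe_dual_def)

lemma nn_integral_less_top_if_integrable_enn2real:
  assumes "AE x in M. f x < \<infinity>" "integrable M (\<lambda>x. enn2real (f x))"
  shows "(\<integral>\<^sup>+ x. f x \<partial>M) < \<infinity>"
proof -
  have "(\<integral>\<^sup>+ x. f x \<partial>M) = (\<integral>\<^sup>+ x. ennreal (norm (enn2real (f x))) \<partial>M)"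
    using assms(1) by (intro nn_integral_cong_AE) auto
  with assms(2) show ?thesis
    by (simp add: integrable_iff_bounded)
qed

theorem proposition4p6:
  fixes X :: "('a::euclidean_space \<Rightarrow> real) set" and n :: "('a \<Rightarrow> real) \<Rightarrow> real"
  assumes "qBFS X n"
    and "\<exists>g\<in>kothe_dual X. \<not> (AE x in lebesgue. g x = 0)"
    and "(\<lambda>x. 1) \<in> X"
  shows "\<not> maximal_bounded_on (kothe_dual X) (kothe_norm X n)"
proof
  assume "maximal_bounded_on (kothe_dual X) (kothe_norm X n)"
  then have M_maps: "(AE x in lebesgue. maximal_op g x < \<infinity>) \<and> (\<lambda>x. enn2real (maximal_op g x)) \<in> kothe_dual X"
    if "g \<in> kothe_dual X" for g
    using that unfolding maximal_bounded_on_def by blast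
  obtain g where g: "g \<in> kothe_dual X" "\<not> (AE x in lebesgue. g x = 0)"
    using assms(2) by blast
  then have "integrable lebesgue (\<lambda>x. enn2real (maximal_op g x))"
    using M_maps kothe_dual_integrable[OF assms(3)] by blast
  then have "(\<integral>\<^sup>+ x. maximal_op g x \<partial>lebesgue) < \<infinity>"
    using M_maps[OF g(1)] by (blast intro: nn_integral_less_top_if_integrable_enn2real)
  moreover have "g \<in> borel_measurable lebesgue"
    using g(1) by (simp add: kothe_dual_def)
  then have "(\<integral>\<^sup>+ x. maximal_op g x \<partial>lebesgue) = \<infinity>"
    using g(2) by (rule nn_integral_maximal_op_eq_top)
  ultimately show False
    by simp
qed

end
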